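(* Let $0<a<1$, $a_N=a\ln N/N$, and let $S=S(N)$ be integers with $N+S(N)\ge0$ and $S=o(N/\ln N)$. For integers $K\ge0$ let $\langle n_0\rangle_{K,a_N}$ denote the expectation of $n_0$ under the probability on sequences $(n_j)_{j\ge0}$ of nonnegative integers with $\sum_jn_j=K$ proportional to $e^{-a_N\sum_jjn_j}$. Then $$\lim_{N\to\infty}N^{-a}\langle n_0\rangle_{N+S,a_N}=1 .$$
   Context: This is the canonical ensemble of $N+S$ noninteracting bosons in a one-dimensional harmonic trap whose scaled level spacing parameter is $a_N$. *)

theory Defs
  imports "HOL-Analysis.Analysis" "HOL-Library.Landau_Symbols"
begin

definition configs :: "nat \<Rightarrow> (nat \<Rightarrow> nat) set" where
  "configs K = {n. finite {j. n j \<noteq> 0} \<and> (\<Sum>j\<in>{j. n j \<noteq> 0}. n j) = K}"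

definition energy :: "(nat \<Rightarrow> nat) \<Rightarrow> nat" where
  "energy n = (\<Sum>j\<in>{j. n j \<noteq> 0}. j * n j)"

definition part_fun :: "nat \<Rightarrow> real \<Rightarrow> real" where
  "part_fun K b = infsum (\<lambda>n. exp (- b * real (energy n))) (configs K)"

definition mean_n0 :: "nat \<Rightarrow> real \<Rightarrow> real" where
  "mean_n0 K b =
     infsum (\<lambda>n. real (n 0) * exp (- b * real (energy n))) (configs K) / part_fun K b"

end

theory Submission
  imports Defs "HOL-Real_Asymp.Real_Asymp"
begin

(* Configurations of K+1 bosons with level 0 occupied arise from configurations of K bosons
   by adding a ground-state boson (same energy); those with level 0 empty arise from
   configurations of K+1 bosons by raising every boson one level (energy up by K+1). Hence
   Z_K = (1 - exp(-b(K+1))) Z_{K+1} and <n_0>_K = sum_{j<K} Z_j / Z_K, where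
   Z_{K-d} / Z_K = prod_{K-d<j<=K} (1 - exp(-bj)). Comparing these products with geometric
   sequences gives (1-y)(1-exp(-yM))/y <= <n_0>_K <= exp(bK) for M <= K and y = exp(-b(K-M)).
   For b = a ln N / N and K = N + o(N / ln N) the upper bound is N^a (1 + o(1)), and so is the
   lower bound for M = N^c with a < c < 1, because then bM -> 0, y ~ N^-a -> 0 and yM -> oo. *)

definition add_ground :: "(nat \<Rightarrow> nat) \<Rightarrow> nat \<Rightarrow> nat" where
  "add_ground n = n(0 := Suc (n 0))"

definition raise_levels :: "(nat \<Rightarrow> nat) \<Rightarrow> nat \<Rightarrow> nat" where
  "raise_levels n = (\<lambda>j. case j of 0 \<Rightarrow> 0 | Suc i \<Rightarrow> n i)"

lemma inj_add_ground: "inj add_ground"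
  by (rule injI) (metis add_ground_def fun_upd_idem_iff fun_upd_same fun_upd_upd nat.inject)

lemma inj_raise_levels: "inj raise_levels"
proof (rule injI)
  fix n m assume "raise_levels n = raise_levels m"
  then have "raise_levels n (Suc j) = raise_levels m (Suc j)" for j by simp
  then show "n = m" by (auto simp: raise_levels_def)
qed

lemma support_add_ground: "{j. add_ground n j \<noteq> 0} = insert 0 {j. n j \<noteq> 0}"
  by (auto simp: add_ground_def)

lemma support_raise_levels: "{j. raise_levels n j \<noteq> 0} = Suc ` {j. n j \<noteq> 0}"
  by (auto simp: raise_levels_def image_iff split: nat.splits) (metis gr0_implies_Suc)

lemma sum_over_support:
  assumes "finite D" "{j. n j \<noteq> 0} \<subseteq> D" "\<And>j. f j 0 = 0"
  shows "(\<Sum>j\<in>{j. n j \<noteq> 0}. f j (n j)) = (\<Sum>j\<in>D. f j (n j))"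
  by (rule sum.mono_neutral_left) (use assms in auto)

lemma sum_add_ground:
  assumes "finite D" "0 \<in> D"
  shows "sum (add_ground n) D = Suc (sum n D)"
proof -
  have "sum (add_ground n) D = add_ground n 0 + sum (add_ground n) (D - {0})"
    by (rule sum.remove[OF assms])
  also have "\<dots> = Suc (n 0) + sum n (D - {0})"
    by (auto simp: add_ground_def intro!: sum.cong)
  also have "\<dots> = Suc (sum n D)"
    using sum.remove[OF assms, of n] by simp
  finally show ?thesis .
qed

lemma add_ground_in_configs: "add_ground n \<in> configs (Suc k) \<longleftrightarrow> n \<in> configs k"
proof (cases "finite {j. n j \<noteq> 0}")
  case True
  define D where "D = insert 0 {j. n j \<noteq> 0}"
  have D: "finite D" "0 \<in> D" using True by (auto simp: D_def)
  have "(\<Sum>j\<in>{j. add_ground n j \<noteq> 0}. add_ground n j) = sum (add_ground n) D"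
    by (rule sum_over_support) (use D in \<open>auto simp: D_def add_ground_def\<close>)
  moreover have "(\<Sum>j\<in>{j. n j \<noteq> 0}. n j) = sum n D"
    by (rule sum_over_support) (use D in \<open>auto simp: D_def\<close>)
  ultimately show ?thesis
    using True sum_add_ground[OF D] unfolding configs_def mem_Collect_eq support_add_ground by simp
qed (unfold configs_def mem_Collect_eq support_add_ground, simp)

lemma energy_add_ground: "energy (add_ground n) = energy n"
proof (cases "finite {j. n j \<noteq> 0}")
  case True
  define D where "D = insert 0 {j. n j \<noteq> 0}"
  have D: "finite D" using True by (auto simp: D_def)
  have "energy (add_ground n) = (\<Sum>j\<in>D. j * add_ground n j)"
    unfolding energy_def by (rule sum_over_support) (use D in \<open>auto simp: D_def add_ground_def\<close>)
  also have "\<dots> = (\<Sum>j\<in>D. j * n j)"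
    by (rule sum.cong) (auto simp: add_ground_def)
  also have "\<dots> = energy n"
    unfolding energy_def by (rule sum_over_support[symmetric]) (use D in \<open>auto simp: D_def\<close>)
  finally show ?thesis .
qed (unfold energy_def support_add_ground, simp)

lemma raise_levels_in_configs: "raise_levels n \<in> configs k \<longleftrightarrow> n \<in> configs k"
proof -
  have "(\<Sum>j\<in>Suc ` {j. n j \<noteq> 0}. raise_levels n j) = (\<Sum>j\<in>{j. n j \<noteq> 0}. n j)"
    by (subst sum.reindex) (auto simp: raise_levels_def)
  then show ?thesis
    unfolding configs_def mem_Collect_eq support_raise_levels by (simp add: finite_image_iff)
qed

lemma energy_raise_levels: "n \<in> configs k \<Longrightarrow> energy (raise_levels n) = energy n + k"
  unfolding energy_def support_raise_levels
  by (subst sum.reindex) (auto simp: raise_levels_def configs_def sum.distrib)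

lemma configs_Suc:
  "configs (Suc k) = add_ground ` configs k \<union> raise_levels ` configs (Suc k)"
proof (intro equalityI subsetI)
  fix n assume n: "n \<in> configs (Suc k)"
  show "n \<in> add_ground ` configs k \<union> raise_levels ` configs (Suc k)"
  proof (cases "n 0 = 0")
    case True
    define m where "m j = n (Suc j)" for j
    have "n = raise_levels m"
      using True by (auto simp: m_def raise_levels_def split: nat.splits)
    moreover have "m \<in> configs (Suc k)"
      using n unfolding \<open>n = raise_levels m\<close> raise_levels_in_configs .
    ultimately show ?thesis by blast
  next
    case False
    define m where "m = n(0 := n 0 - 1)"
    have "n = add_ground m"
      using False by (auto simp: m_def add_ground_def)
    moreover have "m \<in> configs k"
      using n unfolding \<open>n = add_ground m\<close> add_ground_in_configs .
    ultimately show ?thesis by blast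
  qed
next
  fix n assume "n \<in> add_ground ` configs k \<union> raise_levels ` configs (Suc k)"
  then show "n \<in> configs (Suc k)"
    by (auto simp only: add_ground_in_configs raise_levels_in_configs)
qed

lemma add_ground_neq_raise_levels: "add_ground n \<noteq> raise_levels m"
proof
  assume "add_ground n = raise_levels m"
  then have "add_ground n 0 = raise_levels m 0" by simp
  then show False by (simp add: add_ground_def raise_levels_def)
qed

definition boltzmann :: "real \<Rightarrow> (nat \<Rightarrow> nat) \<Rightarrow> real" where
  "boltzmann b n = exp (- b * real (energy n))"

lemma part_fun_eq_infsum: "part_fun K b = infsum (boltzmann b) (configs K)"
  unfolding part_fun_def boltzmann_def ..

lemma boltzmann_add_ground: "boltzmann b (add_ground n) = boltzmann b n"
  by (simp add: boltzmann_def energy_add_ground)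

lemma boltzmann_raise_levels:
  "n \<in> configs k \<Longrightarrow> boltzmann b (raise_levels n) = exp (- b * real k) * boltzmann b n"
  by (simp add: boltzmann_def energy_raise_levels algebra_simps flip: exp_add)

lemma configs_0: "configs 0 = {\<lambda>_. 0}"
  by (auto simp: configs_def)

lemma subset_configs_Suc_decompose:
  assumes "F \<subseteq> configs (Suc k)"
  shows "F = add_ground ` (add_ground -` F) \<union> raise_levels ` (raise_levels -` F)"
proof -
  have "F \<subseteq> range add_ground \<union> range raise_levels"
    using assms configs_Suc[of k] by blast
  then show ?thesis by (auto simp: image_vimage_eq)
qed

lemma has_sum_subset_configs_Suc:
  fixes f :: "(nat \<Rightarrow> nat) \<Rightarrow> real"
  assumes "F \<subseteq> configs (Suc k)"
    and "(f \<circ> add_ground has_sum s) (add_ground -` F)"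
    and "(f \<circ> raise_levels has_sum t) (raise_levels -` F)"
  shows "(f has_sum s + t) F"
proof -
  have "(f has_sum s) (add_ground ` (add_ground -` F))"
    unfolding has_sum_reindex[OF inj_on_subset[OF inj_add_ground subset_UNIV]] by (rule assms(2))
  moreover have "(f has_sum t) (raise_levels ` (raise_levels -` F))"
    unfolding has_sum_reindex[OF inj_on_subset[OF inj_raise_levels subset_UNIV]] by (rule assms(3))
  ultimately show ?thesis
    using add_ground_neq_raise_levels
    by (subst subset_configs_Suc_decompose[OF assms(1)], intro has_sum_Un_disjoint) auto
qed

lemma sum_subset_configs_Suc:
  fixes f :: "(nat \<Rightarrow> nat) \<Rightarrow> real"
  assumes "finite F" "F \<subseteq> configs (Suc k)"
  shows "sum f F = sum (f \<circ> add_ground) (add_ground -` F) + sum (f \<circ> raise_levels) (raise_levels -` F)"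
proof -
  have "finite (add_ground -` F)" "finite (raise_levels -` F)"
    using assms(1) inj_add_ground inj_raise_levels by (auto intro: finite_vimageI)
  then have "(f has_sum sum (f \<circ> add_ground) (add_ground -` F) + sum (f \<circ> raise_levels) (raise_levels -` F)) F"
    by (intro has_sum_subset_configs_Suc[OF assms(2)] has_sum_finite)
  then show ?thesis
    using has_sum_finite[OF assms(1)] has_sum_unique by blast
qed

lemma sum_boltzmann_bounded:
  assumes "b > 0"
  shows "\<exists>B. \<forall>F. finite F \<and> F \<subseteq> configs k \<longrightarrow> sum (boltzmann b) F \<le> B"
proof (induction k)
  case 0
  have "sum (boltzmann b) F \<le> 1" if "finite F" "F \<subseteq> configs 0" for F
  proof -
    have "sum (boltzmann b) F \<le> sum (boltzmann b) (configs 0)"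
      using that by (intro sum_mono2) (auto simp: configs_0 boltzmann_def)
    then show ?thesis by (simp add: configs_0 boltzmann_def energy_def)
  qed
  then show ?case by blast
next
  case (Suc k)
  then obtain B where B: "\<And>G. finite G \<Longrightarrow> G \<subseteq> configs k \<Longrightarrow> sum (boltzmann b) G \<le> B"
    by blast
  have "B \<ge> 0" using B[of "{}"] by simp
  define e where "e = exp (- b * real (Suc k))"
  have e: "0 < e" "e < 1" using assms by (auto simp: e_def)
  have "sum (boltzmann b) F \<le> B / (1 - e)"
    if "finite F" "F \<subseteq> configs (Suc k)" "\<forall>n\<in>F. energy n < E" for E F
    \<comment> \<open>the raised part lies in \<open>configs (Suc k)\<close> again, but has smaller energies\<close>
    using that
  proof (induction E arbitrary: F)
    case 0
    then show ?case using \<open>B \<ge> 0\<close> e by simp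
  next
    case (Suc E)
    define G where "G = add_ground -` F"
    define H where "H = raise_levels -` F"
    have H: "H \<subseteq> configs (Suc k)"
      using Suc.prems(2) raise_levels_in_configs by (auto simp: H_def)
    have "sum (boltzmann b) F = sum (boltzmann b) G + sum (boltzmann b \<circ> raise_levels) H"
      using sum_subset_configs_Suc[OF Suc.prems(1,2)] by (simp add: G_def H_def o_def boltzmann_add_ground)
    moreover have "sum (boltzmann b) G \<le> B"
    proof (rule B)
      show "finite G" using Suc.prems(1) inj_add_ground by (simp add: G_def finite_vimageI)
      show "G \<subseteq> configs k" using Suc.prems(2) add_ground_in_configs by (auto simp: G_def)
    qed
    moreover have "sum (boltzmann b \<circ> raise_levels) H = e * sum (boltzmann b) H"
      using H unfolding sum_distrib_left e_def by (auto simp: boltzmann_raise_levels intro!: sum.cong)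
    moreover have "sum (boltzmann b) H \<le> B / (1 - e)"
    proof (rule Suc.IH)
      show "finite H" using Suc.prems(1) inj_raise_levels by (simp add: H_def finite_vimageI)
      show "H \<subseteq> configs (Suc k)" by (rule H)
      show "\<forall>n\<in>H. energy n < E"
        using Suc.prems(3) H energy_raise_levels by (force simp: H_def)
    qed
    ultimately have "sum (boltzmann b) F \<le> B + e * (B / (1 - e))"
      using e by (smt (verit) mult_left_mono)
    also have "\<dots> = B / (1 - e)"
      using e by (simp add: field_simps)
    finally show ?case .
  qed
  moreover have "\<forall>n\<in>F. energy n < Suc (sum energy F)" if "finite F" for F
    using that by (auto simp: less_Suc_eq_le intro: member_le_sum)
  ultimately show ?case by blast
qed

lemma boltzmann_summable_on_configs:
  assumes "b > 0"
  shows "boltzmann b summable_on configs k"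
proof (rule nonneg_bdd_above_summable_on)
  show "0 \<le> boltzmann b n" for n
    by (simp add: boltzmann_def)
  obtain B where "\<forall>F. finite F \<and> F \<subseteq> configs k \<longrightarrow> sum (boltzmann b) F \<le> B"
    using sum_boltzmann_bounded[OF assms] by blast
  then show "bdd_above (sum (boltzmann b) ` {F. F \<subseteq> configs k \<and> finite F})"
    by (intro bdd_aboveI[of _ B]) auto
qed

lemma has_sum_part_fun:
  "b > 0 \<Longrightarrow> (boltzmann b has_sum part_fun k b) (configs k)"
  unfolding part_fun_eq_infsum by (rule has_sum_infsum[OF boltzmann_summable_on_configs])

lemma part_fun_0: "part_fun 0 b = 1"
  by (simp add: part_fun_def configs_0 energy_def)

lemma vimage_add_ground_configs: "add_ground -` configs (Suc k) = configs k"
  by (auto simp: add_ground_in_configs)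

lemma vimage_raise_levels_configs: "raise_levels -` configs k = configs k"
  by (auto simp: raise_levels_in_configs)

lemma part_fun_Suc:
  assumes "b > 0"
  shows "part_fun k b = (1 - exp (- b * real (Suc k))) * part_fun (Suc k) b"
proof -
  have "(boltzmann b \<circ> add_ground has_sum part_fun k b) (add_ground -` configs (Suc k))"
    using has_sum_part_fun[OF assms, of k] by (simp add: o_def boltzmann_add_ground vimage_add_ground_configs)
  moreover have "(boltzmann b \<circ> raise_levels has_sum exp (- b * real (Suc k)) * part_fun (Suc k) b)
      (raise_levels -` configs (Suc k))"
    using has_sum_cmult_right[OF has_sum_part_fun[OF assms, of "Suc k"]]
    by (simp add: vimage_raise_levels_configs) (auto simp: boltzmann_raise_levels intro: has_sum_cong[THEN iffD1])
  ultimately have "(boltzmann b has_sum part_fun k b + exp (- b * real (Suc k)) * part_fun (Suc k) b)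
      (configs (Suc k))"
    by (rule has_sum_subset_configs_Suc[OF order_refl])
  then have "part_fun (Suc k) b = part_fun k b + exp (- b * real (Suc k)) * part_fun (Suc k) b"
    using has_sum_part_fun[OF assms, of "Suc k"] has_sum_unique by blast
  then show ?thesis by (simp add: algebra_simps)
qed

lemma part_fun_pos:
  assumes "b > 0"
  shows "part_fun k b > 0"
proof (induction k)
  case (Suc k)
  have "0 < 1 - exp (- b * real (Suc k))"
    using assms by simp
  then show ?case
    using Suc part_fun_Suc[OF assms, of k] zero_less_mult_pos by metis
qed (simp add: part_fun_0)

lemma has_sum_ground_occupation:
  assumes "b > 0"
  shows "((\<lambda>n. real (n 0) * boltzmann b n) has_sum (\<Sum>j<k. part_fun j b)) (configs k)"
proof (induction k)
  case 0
  show ?case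
    unfolding lessThan_0 sum.empty configs_0 by (rule has_sum_0) simp
next
  case (Suc k)
  have "((\<lambda>n. real (n 0) * boltzmann b n) \<circ> add_ground has_sum (\<Sum>j<k. part_fun j b) + part_fun k b)
      (add_ground -` configs (Suc k))"
    using has_sum_add[OF Suc.IH has_sum_part_fun[OF assms, of k]]
    by (simp add: vimage_add_ground_configs o_def boltzmann_add_ground)
       (simp add: add_ground_def algebra_simps)
  moreover have "((\<lambda>n. real (n 0) * boltzmann b n) \<circ> raise_levels has_sum 0) (raise_levels -` configs (Suc k))"
    by (rule has_sum_0) (simp add: raise_levels_def)
  ultimately show ?case
    using has_sum_subset_configs_Suc[OF order_refl] by fastforce
qed

lemma mean_n0_eq:
  assumes "b > 0"
  shows "mean_n0 K b = (\<Sum>j<K. part_fun j b) / part_fun K b"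
  using has_sum_ground_occupation[OF assms, of K]
  unfolding mean_n0_def boltzmann_def by (simp add: infsumI)

lemma part_fun_diff_eq_prod:
  assumes "b > 0" "d \<le> K"
  shows "part_fun (K - d) b = (\<Prod>j\<in>{K - d<..K}. 1 - exp (- b * real j)) * part_fun K b"
  using assms(2)
proof (induction d)
  case (Suc d)
  define m where "m = K - Suc d"
  have K_d: "K - d = Suc m" using Suc.prems by (simp add: m_def)
  have "{m<..K} = insert (Suc m) {Suc m<..K}"
    using Suc.prems by (auto simp: m_def)
  then have "(\<Prod>j\<in>{m<..K}. 1 - exp (- b * real j))
      = (1 - exp (- b * real (Suc m))) * (\<Prod>j\<in>{Suc m<..K}. 1 - exp (- b * real j))"
    by simp
  then show ?case
    using Suc part_fun_Suc[OF assms(1), of m] by (simp add: m_def[symmetric] K_d)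
qed simp

lemma part_fun_ratio_le:
  assumes "b > 0" "d \<le> K"
  shows "part_fun (K - d) b / part_fun K b \<le> (1 - exp (- b * real K)) ^ d"
proof -
  have "(\<Prod>j\<in>{K - d<..K}. 1 - exp (- b * real j)) \<le> (\<Prod>j\<in>{K - d<..K}. 1 - exp (- b * real K))"
    using assms(1) by (intro prod_mono) auto
  then show ?thesis
    using part_fun_diff_eq_prod[OF assms] part_fun_pos[OF assms(1), of K] assms(2) by simp
qed

lemma part_fun_ratio_ge:
  assumes "b > 0" "d \<le> M" "M \<le> K"
  shows "(1 - exp (- b * real (K - M))) ^ d \<le> part_fun (K - d) b / part_fun K b"
proof -
  have "(\<Prod>j\<in>{K - d<..K}. 1 - exp (- b * real (K - M))) \<le> (\<Prod>j\<in>{K - d<..K}. 1 - exp (- b * real j))"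
    using assms by (intro prod_mono) auto
  then show ?thesis
    using part_fun_diff_eq_prod[of b d K] part_fun_pos[OF assms(1), of K] assms by simp
qed

lemma sum_power_Suc_one_minus:
  fixes x :: real
  assumes "x \<noteq> 0"
  shows "(\<Sum>i<n. (1 - x) ^ Suc i) = (1 - x) * (1 - (1 - x) ^ n) / x"
  using assms by (simp add: sum_distrib_left[symmetric] sum_gp_strict)

lemma mean_n0_eq_sum_ratio:
  assumes "b > 0"
  shows "mean_n0 K b = (\<Sum>i<K. part_fun (K - Suc i) b / part_fun K b)"
  unfolding mean_n0_eq[OF assms] sum_divide_distrib
  using sum.nat_diff_reindex[where g = "\<lambda>j. part_fun j b / part_fun K b"] by simp

lemma mean_n0_le_exp:
  assumes "b > 0"
  shows "mean_n0 K b \<le> exp (b * real K)"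
proof -
  define x where "x = exp (- b * real K)"
  have x: "0 < x" "x \<le> 1" using assms by (auto simp: x_def)
  have "mean_n0 K b \<le> (\<Sum>i<K. (1 - x) ^ Suc i)"
    unfolding mean_n0_eq_sum_ratio[OF assms] x_def
    by (intro sum_mono part_fun_ratio_le[OF assms]) auto
  also have "\<dots> = (1 - x) * (1 - (1 - x) ^ K) / x"
    by (rule sum_power_Suc_one_minus) (use x in simp)
  also have "\<dots> \<le> 1 / x"
    using x by (intro divide_right_mono mult_le_one) (auto intro: power_le_one)
  also have "\<dots> = exp (b * real K)"
    by (simp add: x_def exp_minus divide_inverse)
  finally show ?thesis .
qed

lemma mean_n0_ge:
  assumes "b > 0" "M \<le> K"
  defines "y \<equiv> exp (- b * real (K - M))"
  shows "(1 - y) * (1 - exp (- y * real M)) / y \<le> mean_n0 K b"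
proof -
  have y: "0 < y" "y \<le> 1" using assms(1) by (auto simp: y_def)
  have "(1 - y) ^ M \<le> exp (- y) ^ M"
    using y exp_ge_add_one_self[of "- y"] by (intro power_mono) auto
  then have "(1 - y) * (1 - exp (- y * real M)) / y \<le> (1 - y) * (1 - (1 - y) ^ M) / y"
    using y by (intro divide_right_mono mult_left_mono) (auto simp: exp_of_nat_mult[symmetric] mult.commute)
  also have "\<dots> = (\<Sum>i<M. (1 - y) ^ Suc i)"
    by (rule sum_power_Suc_one_minus[symmetric]) (use y in simp)
  also have "\<dots> \<le> (\<Sum>i<M. part_fun (K - Suc i) b / part_fun K b)"
    unfolding y_def using assms(2) by (intro sum_mono part_fun_ratio_ge[OF assms(1)]) auto
  also have "\<dots> \<le> mean_n0 K b"
    unfolding mean_n0_eq_sum_ratio[OF assms(1)]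
    using assms part_fun_pos by (intro sum_mono2) (auto intro: less_imp_le)
  finally show ?thesis .
qed

lemma tendsto_scaled_mean_n0:
  fixes u b :: "'a \<Rightarrow> real" and K M :: "'a \<Rightarrow> nat"
  assumes b_pos: "eventually (\<lambda>x. b x > 0) F"
    and energy_scale: "((\<lambda>x. u x * exp (b x * real (K x))) \<longlongrightarrow> 1) F"
    and M_le_K: "eventually (\<lambda>x. M x \<le> K x) F"
    and bM: "((\<lambda>x. b x * real (M x)) \<longlongrightarrow> 0) F"
    and u: "(u \<longlongrightarrow> 0) F"
    and uM: "filterlim (\<lambda>x. u x * real (M x)) at_top F"
  shows "((\<lambda>x. u x * mean_n0 (K x) (b x)) \<longlongrightarrow> 1) F"
proof -
  define w where "w x = u x * exp (b x * real (K x))" for x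
  define y where "y x = exp (- b x * real (K x - M x))" for x
  define L where "L x = w x / exp (b x * real (M x)) * (1 - y x) * (1 - exp (- y x * real (M x)))" for x
  have w_pos: "eventually (\<lambda>x. w x > 0) F"
    using order_tendstoD(1)[OF energy_scale[folded w_def], of 0] by simp
  have y_eq: "eventually (\<lambda>x. y x = u x * (exp (b x * real (M x)) / w x)) F"
    using M_le_K w_pos
  proof eventually_elim
    case (elim x)
    then have "u x \<noteq> 0" by (auto simp: w_def)
    with elim show ?case
      by (simp add: y_def w_def of_nat_diff algebra_simps exp_diff)
  qed
  have exp_bM_w: "((\<lambda>x. exp (b x * real (M x)) / w x) \<longlongrightarrow> 1) F"
    using tendsto_divide[OF tendsto_exp[OF bM] energy_scale[folded w_def]] by simp
  have y_tendsto: "(y \<longlongrightarrow> 0) F"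
    using tendsto_mult[OF u exp_bM_w] y_eq by (simp add: tendsto_cong)
  have "filterlim (\<lambda>x. exp (b x * real (M x)) / w x * (u x * real (M x))) at_top F"
    by (rule filterlim_tendsto_pos_mult_at_top[OF exp_bM_w _ uM]) simp
  then have "filterlim (\<lambda>x. y x * real (M x)) at_top F"
    by (rule filterlim_cong[THEN iffD1, rotated 3]) (use y_eq in \<open>auto elim: eventually_mono\<close>)
  then have "((\<lambda>x. exp (- y x * real (M x))) \<longlongrightarrow> 0) F"
    by (intro filterlim_compose[OF exp_at_bot]) (simp add: filterlim_uminus_at_bot)
  moreover have "((\<lambda>x. w x / exp (b x * real (M x))) \<longlongrightarrow> 1) F"
    using tendsto_divide[OF energy_scale[folded w_def] tendsto_exp[OF bM]] by simp
  ultimately have L_tendsto: "(L \<longlongrightarrow> 1 * (1 - 0) * (1 - 0)) F"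
    unfolding L_def by (intro tendsto_mult tendsto_diff tendsto_const y_tendsto)
  have lower: "eventually (\<lambda>x. L x \<le> u x * mean_n0 (K x) (b x)) F"
    using b_pos M_le_K w_pos
  proof eventually_elim
    case (elim x)
    have "u x / y x = w x / exp (b x * real (M x))"
      using elim(2) by (simp add: y_def w_def of_nat_diff algebra_simps exp_diff)
    then have "L x = u x / y x * (1 - y x) * (1 - exp (- y x * real (M x)))"
      by (simp add: L_def)
    also have "\<dots> = u x * ((1 - y x) * (1 - exp (- y x * real (M x))) / y x)"
      by simp
    also have "\<dots> \<le> u x * mean_n0 (K x) (b x)"
      using elim mean_n0_ge[OF elim(1,2)] by (intro mult_left_mono) (auto simp: y_def w_def zero_less_mult_iff)
    finally show ?case .
  qed
  have upper: "eventually (\<lambda>x. u x * mean_n0 (K x) (b x) \<le> w x) F"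
    using b_pos w_pos
  proof eventually_elim
    case (elim x)
    then show ?case
      using mean_n0_le_exp[OF elim(1), of "K x"] by (auto simp: w_def zero_less_mult_iff intro: mult_left_mono)
  qed
  show ?thesis
    using tendsto_sandwich[OF lower upper _ energy_scale[folded w_def]] L_tendsto by simp
qed

lemma powr_minus_mult_exp_tendsto_1:
  fixes a :: real and S :: "nat \<Rightarrow> int"
  assumes "\<forall>N. int N + S N \<ge> 0"
    and "(\<lambda>N. real_of_int (S N)) \<in> o(\<lambda>N. real N / ln (real N))"
  shows "(\<lambda>N. real N powr (- a) * exp (a * ln (real N) / real N * real (nat (int N + S N))))
           \<longlonglongrightarrow> 1"
proof -
  have "(\<lambda>N. exp (a * (real_of_int (S N) / (real N / ln (real N))))) \<longlonglongrightarrow> exp (a * 0)"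
    by (intro tendsto_intros smalloD_tendsto[OF assms(2)])
  moreover have "eventually (\<lambda>N. exp (a * (real_of_int (S N) / (real N / ln (real N))))
      = real N powr (- a) * exp (a * ln (real N) / real N * real (nat (int N + S N)))) sequentially"
    using eventually_gt_at_top[of 0]
  proof eventually_elim
    case (elim N)
    have "real (nat (int N + S N)) = real N + real_of_int (S N)"
      using assms(1) by (metis of_int_of_nat_eq of_int_add nat_0_le of_nat_nat)
    with elim show ?case
      by (simp add: powr_def field_simps flip: exp_add)
  qed
  ultimately show ?thesis
    by (simp add: tendsto_cong)
qed

lemma eventually_nat_floor_powr_le:
  fixes c :: real and S :: "nat \<Rightarrow> int"
  assumes "c < 1"
    and "(\<lambda>N. real_of_int (S N)) \<in> o(\<lambda>N. real N / ln (real N))"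
  shows "eventually (\<lambda>N. nat \<lfloor>real N powr c\<rfloor> \<le> nat (int N + S N)) sequentially"
proof -
  have "eventually (\<lambda>N. real N powr c + real N / ln (real N) \<le> real N) sequentially"
    using assms(1) by real_asymp
  moreover have "eventually (\<lambda>N. 0 \<le> real N / ln (real N)) sequentially"
    by real_asymp
  moreover have "eventually (\<lambda>N. \<bar>real_of_int (S N)\<bar> \<le> \<bar>real N / ln (real N)\<bar>) sequentially"
    using landau_o.smallD[OF assms(2) zero_less_one] by simp
  ultimately show ?thesis
  proof eventually_elim
    case (elim N)
    then have "real_of_int \<lfloor>real N powr c\<rfloor> \<le> real_of_int (int N + S N)"
      by linarith
    then show ?case
      by (simp add: nat_mono)
  qed
qed

lemma ln_div_mult_nat_floor_powr_tendsto_0: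
  fixes a c :: real
  assumes "c < 1"
  shows "(\<lambda>N. a * ln (real N) / real N * real (nat \<lfloor>real N powr c\<rfloor>)) \<longlonglongrightarrow> 0"
proof -
  have "(\<lambda>N. ln (real N) / real N * real (nat \<lfloor>real N powr c\<rfloor>)) \<longlonglongrightarrow> 0"
  proof (rule tendsto_sandwich)
    show "eventually (\<lambda>N. 0 \<le> ln (real N) / real N * real (nat \<lfloor>real N powr c\<rfloor>)) sequentially"
      using eventually_gt_at_top[of 0] by eventually_elim simp
    show "eventually (\<lambda>N. ln (real N) / real N * real (nat \<lfloor>real N powr c\<rfloor>)
        \<le> ln (real N) / real N * real N powr c) sequentially"
      using eventually_gt_at_top[of 0] by eventually_elim (intro mult_left_mono, auto)
    show "(\<lambda>N. ln (real N) / real N * real N powr c) \<longlonglongrightarrow> 0"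
      using assms by real_asymp
  qed simp
  from tendsto_mult_right_zero[OF this, of a] show ?thesis
    by (simp add: mult.assoc)
qed

lemma filterlim_powr_mult_nat_floor_powr_at_top:
  fixes a c :: real
  assumes "0 < c" "a < c"
  shows "filterlim (\<lambda>N. real N powr (- a) * real (nat \<lfloor>real N powr c\<rfloor>)) at_top sequentially"
proof (rule filterlim_at_top_mono)
  show "filterlim (\<lambda>N. real N powr (- a) * (real N powr c - 1)) at_top sequentially"
    using assms by real_asymp
  show "eventually (\<lambda>N. real N powr (- a) * (real N powr c - 1)
      \<le> real N powr (- a) * real (nat \<lfloor>real N powr c\<rfloor>)) sequentially"
    by (intro always_eventually allI mult_left_mono) (linarith, simp)
qed

theorem corollary3:
  fixes a :: real and S :: "nat \<Rightarrow> int"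
  assumes "0 < a" and "a < 1"
    and "\<forall>N. int N + S N \<ge> 0"
    and "(\<lambda>N. real_of_int (S N)) \<in> o(\<lambda>N. real N / ln (real N))"
  shows "(\<lambda>N. real N powr (- a) * mean_n0 (nat (int N + S N)) (a * ln (real N) / real N))
           \<longlonglongrightarrow> 1"
proof -
  define c where "c = (1 + a) / 2"
  have c: "a < c" "c < 1" "0 < c"
    using assms(1,2) by (auto simp: c_def)
  show ?thesis
  proof (rule tendsto_scaled_mean_n0[where M = "\<lambda>N. nat \<lfloor>real N powr c\<rfloor>"])
    show "eventually (\<lambda>N. 0 < a * ln (real N) / real N) sequentially"
      using eventually_gt_at_top[of 1] by eventually_elim (simp add: assms(1))
    show "(\<lambda>N. real N powr (- a)) \<longlonglongrightarrow> 0"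
      using assms(1) by real_asymp
  qed (fact powr_minus_mult_exp_tendsto_1[OF assms(3,4)]
      eventually_nat_floor_powr_le[OF c(2) assms(4)]
      ln_div_mult_nat_floor_powr_tendsto_0[OF c(2)]
      filterlim_powr_mult_nat_floor_powr_at_top[OF c(3,1)])+
qed

end
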